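(* For every positive integer $n$, $$\sum_{j=1}^{n}\csc^4\left(\frac{\pi(2j-1)}{4n}\right) = \frac{4n^2(2n^2+1)}{3}.$$ *)

theory Defs
  imports Complex_Main
begin

definition csc :: "real \<Rightarrow> real" where
  "csc x = 1 / sin x"

end

theory Submission
  imports Defs "HOL-Analysis.Analysis"
begin

(* With z = exp (2 i y) and w = exp (2 pi i / m), the partial-fraction identity
   sum_k 1 / (z w^k - 1) = m / (z^m - 1) yields the cotangent multiplication formula
   sum_{k<m} cot (y + k pi / m) = m cot (m y). Differentiating it three times in y gives
   the analogous identities for csc^2, csc^2 cot and 2 csc^2 - 3 csc^4, hence
   sum_{k<m} csc^4 (y + k pi / m) = m^4 csc^4 (m y) - 2/3 m^2 (m^2 - 1) csc^2 (m y).
   For m = 2n and y = pi / (4n) we have csc (m y) = 1, and the 2n angles (2k+1) pi / (4n)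
   pair up as t and pi - t, so the sum over k < 2n is twice the one in the theorem. *)

lemma power_sum_primitive_root:
  fixes \<omega> :: "'a::field"
  assumes root: "\<omega> ^ m = 1" and primitive: "\<And>l. 0 < l \<Longrightarrow> l < m \<Longrightarrow> \<omega> ^ l \<noteq> 1"
    and "l < m"
  shows "(\<Sum>k<m. \<omega> ^ (k * l)) = (if l = 0 then of_nat m else 0)"
proof (cases "l = 0")
  case False
  have "(\<omega> ^ l) ^ m = 1"
    by (metis root power_mult power_one mult.commute)
  moreover have "\<omega> ^ l \<noteq> 1"
    using primitive False \<open>l < m\<close> by simp
  ultimately have "(\<Sum>k<m. (\<omega> ^ l) ^ k) = 0"
    by (simp add: sum_gp_strict)
  then show ?thesis
    using False by (simp add: power_mult[symmetric] mult.commute)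
qed simp

lemma sum_inverse_rotations_minus_one:
  fixes \<omega> z :: "'a::field"
  assumes root: "\<omega> ^ m = 1" and primitive: "\<And>l. 0 < l \<Longrightarrow> l < m \<Longrightarrow> \<omega> ^ l \<noteq> 1"
    and z: "z ^ m \<noteq> 1"
  shows "(\<Sum>k<m. 1 / (z * \<omega> ^ k - 1)) = of_nat m / (z ^ m - 1)"
proof -
  have "m > 0"
    using z by (cases m) auto
  have rotation_power: "(z * \<omega> ^ k) ^ m = z ^ m" for k
  proof -
    have "(\<omega> ^ k) ^ m = (\<omega> ^ m) ^ k"
      by (simp add: power_mult[symmetric] mult.commute)
    then show ?thesis
      by (simp add: power_mult_distrib root)
  qed
  have inverse_as_sum: "1 / (z * \<omega> ^ k - 1) = (\<Sum>l<m. z ^ l * \<omega> ^ (k * l)) / (z ^ m - 1)"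
    for k
  proof -
    have "z ^ m - 1 = (z * \<omega> ^ k - 1) * (\<Sum>l<m. (z * \<omega> ^ k) ^ l)"
      using power_diff_1_eq[of "z * \<omega> ^ k" m] by (simp only: rotation_power)
    moreover have "z ^ m - 1 \<noteq> 0"
      using z by simp
    ultimately show ?thesis
      by (simp add: power_mult_distrib power_mult[symmetric] mult.commute nonzero_eq_divide_eq)
  qed
  have "(\<Sum>k<m. 1 / (z * \<omega> ^ k - 1))
      = (\<Sum>k<m. \<Sum>l<m. z ^ l * \<omega> ^ (k * l)) / (z ^ m - 1)"
    by (simp add: inverse_as_sum sum_divide_distrib)
  also have "\<dots> = (\<Sum>l<m. z ^ l * (\<Sum>k<m. \<omega> ^ (k * l))) / (z ^ m - 1)"
    by (subst sum.swap) (simp add: sum_distrib_left)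
  also have "\<dots> = of_nat m / (z ^ m - 1)"
    using \<open>m > 0\<close> by (simp add: power_sum_primitive_root[OF root primitive] if_distrib sum.delta'
        cong: if_cong)
  finally show ?thesis .
qed

lemma exp_root_of_unity:
  assumes "m > 0"
  shows "exp (2 * pi * \<i> / of_nat m) ^ m = 1"
    and "\<And>l. 0 < l \<Longrightarrow> l < m \<Longrightarrow> exp (2 * pi * \<i> / of_nat m) ^ l \<noteq> 1"
proof -
  have power: "exp (2 * pi * \<i> / of_nat m) ^ l = exp (2 * of_real pi * \<i> * of_nat l / of_nat m)"
    for l :: nat
    by (simp add: exp_of_nat_mult[symmetric] mult_ac)
  have "exp (2 * pi * \<i> / of_nat m) ^ m = exp (of_nat m * (2 * pi * \<i> / of_nat m))"
    by (rule exp_of_nat_mult[symmetric])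
  then show "exp (2 * pi * \<i> / of_nat m) ^ m = 1"
    using assms by simp
  show "exp (2 * pi * \<i> / of_nat m) ^ l \<noteq> 1" if "0 < l" "l < m" for l
    using that complex_root_unity_eq_1[of m l] unfolding power by (simp add: nat_dvd_not_less)
qed

lemma exp_double_neq_1:
  fixes z :: complex
  assumes "sin z \<noteq> 0"
  shows "exp (2 * \<i> * z) \<noteq> 1"
proof
  assume "exp (2 * \<i> * z) = 1"
  then have "exp (\<i> * z) * exp (\<i> * z) = 1"
    by (metis exp_add mult_2 mult.assoc)
  then have "exp (\<i> * z) = exp (- (\<i> * z))"
    by (simp add: exp_minus field_simps)
  then show False
    using assms by (simp add: sin_exp_eq)
qed

lemma cot_eq_exp:
  fixes z :: complex
  assumes "sin z \<noteq> 0"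
  shows "cot z = \<i> + 2 * \<i> / (exp (2 * \<i> * z) - 1)"
proof -
  define a where "a = exp (\<i> * z)"
  have sin: "sin z = (a - 1 / a) / (2 * \<i>)" and cos: "cos z = (a + 1 / a) / 2"
    by (simp_all add: sin_exp_eq cos_exp_eq a_def exp_minus inverse_eq_divide)
  have square: "exp (2 * \<i> * z) = a ^ 2"
    by (metis a_def exp_add mult_2 mult.assoc power2_eq_square)
  have "a \<noteq> 0"
    by (simp add: a_def)
  moreover have "a ^ 2 \<noteq> 1"
    using exp_double_neq_1[OF assms] square by simp
  ultimately show ?thesis
    unfolding cot_def sin cos square by (simp add: field_simps power2_eq_square)
qed

lemma sin_shift_neq_0:
  fixes y :: real
  assumes "sin (real m * y) \<noteq> 0"
  shows "sin (y + real k * pi / real m) \<noteq> 0"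
proof
  assume "sin (y + real k * pi / real m) = 0"
  then obtain i :: int where i: "y + real k * pi / real m = of_int i * pi"
    by (auto simp: sin_zero_iff_int2)
  have "m \<noteq> 0"
    using assms by (metis mult_zero_left of_nat_0 sin_zero)
  with i have "real m * y = of_int (int m * i - int k) * pi"
    by (simp add: field_simps)
  then have "sin (real m * y) = 0"
    unfolding sin_zero_iff_int2 by blast
  with assms show False
    by contradiction
qed

lemma cot_sum_shifts:
  fixes y :: real
  assumes "sin (real m * y) \<noteq> 0"
  shows "(\<Sum>k<m. cot (y + real k * pi / real m)) = real m * cot (real m * y)"
proof -
  have "m > 0"
    using assms by (metis gr0I mult_zero_left of_nat_0 sin_zero)
  define \<omega> where "\<omega> = exp (2 * pi * \<i> / of_nat m)"
  define z where "z = exp (2 * \<i> * of_real y)"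
  have rotation: "exp (2 * \<i> * of_real (y + real k * pi / real m)) = z * \<omega> ^ k" for k
  proof -
    have "2 * \<i> * of_real (y + real k * pi / real m)
        = 2 * \<i> * of_real y + of_nat k * (2 * pi * \<i> / of_nat m)"
      by (simp add: field_simps)
    then show ?thesis
      unfolding z_def \<omega>_def by (simp only: exp_add exp_of_nat_mult)
  qed
  have power: "z ^ m = exp (2 * \<i> * of_real (real m * y))"
    unfolding z_def by (simp add: exp_of_nat_mult[symmetric] mult_ac)
  have cot_complex: "complex_of_real (cot x) = \<i> + 2 * \<i> / (exp (2 * \<i> * of_real x) - 1)"
    if "sin x \<noteq> 0" for x
    using cot_eq_exp[of "of_real x"] that by (simp add: cot_of_real sin_of_real)
  have "z ^ m \<noteq> 1"
    unfolding power
    by (rule exp_double_neq_1) (simp only: sin_of_real of_real_eq_0_iff assms not_False_eq_True)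
  have "complex_of_real (\<Sum>k<m. cot (y + real k * pi / real m))
      = (\<Sum>k<m. \<i> + 2 * \<i> / (z * \<omega> ^ k - 1))"
    unfolding of_real_sum
    by (rule sum.cong[OF refl]) (simp only: cot_complex[OF sin_shift_neq_0[OF assms]] rotation)
  also have "\<dots> = of_nat m * \<i> + 2 * \<i> * (\<Sum>k<m. 1 / (z * \<omega> ^ k - 1))"
    by (simp add: sum.distrib sum_distrib_left)
  also have "\<dots> = of_nat m * \<i> + 2 * \<i> * (of_nat m / (z ^ m - 1))"
    using sum_inverse_rotations_minus_one[OF exp_root_of_unity[OF \<open>m > 0\<close>] \<open>z ^ m \<noteq> 1\<close>]
    by (simp only: \<omega>_def)
  also have "\<dots> = complex_of_real (real m * cot (real m * y))"
    using assms by (simp add: cot_complex power distrib_left)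
  finally show ?thesis
    by (simp only: of_real_eq_iff)
qed

lemma sum_shifts_derivative:
  fixes f f' :: "real \<Rightarrow> real"
  assumes deriv: "\<And>x. sin x \<noteq> 0 \<Longrightarrow> (f has_real_derivative f' x) (at x)"
    and identity: "\<And>x. sin (real m * x) \<noteq> 0 \<Longrightarrow>
      (\<Sum>k<m. f (x + real k * pi / real m)) = c * f (real m * x)"
    and y: "sin (real m * y) \<noteq> 0"
  shows "(\<Sum>k<m. f' (y + real k * pi / real m)) = c * real m * f' (real m * y)"
proof -
  have "((\<lambda>x. \<Sum>k<m. f (x + real k * pi / real m)) has_real_derivative
      (\<Sum>k<m. f' (y + real k * pi / real m))) (at y)"
  proof (rule DERIV_sum)
    fix k
    have "((\<lambda>x. x + real k * pi / real m) has_real_derivative 1) (at y)"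
      by (auto intro!: derivative_eq_intros)
    from DERIV_chain2[OF deriv[OF sin_shift_neq_0[OF y]] this]
    show "((\<lambda>x. f (x + real k * pi / real m)) has_real_derivative
        f' (y + real k * pi / real m)) (at y)"
      by simp
  qed
  moreover have "open {x. sin (real m * x) \<noteq> 0}"
    by (rule open_Collect_neq) (auto intro!: continuous_intros)
  ultimately have left: "((\<lambda>x. c * f (real m * x)) has_real_derivative
      (\<Sum>k<m. f' (y + real k * pi / real m))) (at y)"
    by (rule has_field_derivative_transform_within_open) (use y identity in auto)
  have "((\<lambda>x. real m * x) has_real_derivative real m) (at y)"
    by (auto intro!: derivative_eq_intros)
  from DERIV_cmult[OF DERIV_chain2[OF deriv[OF y] this], of c]
  have right: "((\<lambda>x. c * f (real m * x)) has_real_derivative c * real m * f' (real m * y)) (at y)"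
    by (simp add: mult_ac)
  show ?thesis
    using DERIV_unique[OF left right] .
qed

lemma has_real_derivative_cot:
  "sin x \<noteq> 0 \<Longrightarrow> (cot has_real_derivative - (csc x ^ 2)) (at x)"
  using DERIV_cot[of x] by (simp add: csc_def power_one_over inverse_eq_divide)

lemma has_real_derivative_csc_squared:
  "sin x \<noteq> 0 \<Longrightarrow> ((\<lambda>x. csc x ^ 2) has_real_derivative - 2 * (csc x ^ 2 * cot x)) (at x)"
  unfolding csc_def cot_def
  by (auto intro!: derivative_eq_intros simp: field_simps power2_eq_square power3_eq_cube)

lemma has_real_derivative_csc_squared_cot:
  assumes "sin x \<noteq> 0"
  shows "((\<lambda>x. csc x ^ 2 * cot x) has_real_derivative 2 * csc x ^ 2 - 3 * csc x ^ 4) (at x)"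
proof -
  have quotient: "((\<lambda>x. cos x / sin x ^ 3) has_real_derivative
      (- sin x * sin x ^ 3 - cos x * (3 * sin x ^ 2 * cos x)) / (sin x ^ 3 * sin x ^ 3)) (at x)"
    using assms by (auto intro!: derivative_eq_intros)
  have numerator: "- sin x * sin x ^ 3 - cos x * (3 * sin x ^ 2 * cos x)
      = 2 * sin x ^ 4 - 3 * sin x ^ 2"
    using sin_cos_squared_add[of x] by algebra
  have derivative: "(- sin x * sin x ^ 3 - cos x * (3 * sin x ^ 2 * cos x)) / (sin x ^ 3 * sin x ^ 3)
      = 2 * csc x ^ 2 - 3 * csc x ^ 4"
    unfolding numerator using assms
    by (simp add: csc_def field_simps power2_eq_square power3_eq_cube power4_eq_xxxx)
  have "(\<lambda>x. csc x ^ 2 * cot x) = (\<lambda>x. cos x / sin x ^ 3)"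
    by (simp add: csc_def cot_def power2_eq_square power3_eq_cube)
  with quotient show ?thesis
    unfolding derivative by simp
qed

lemma csc_squared_sum_shifts:
  assumes "sin (real m * y) \<noteq> 0"
  shows "(\<Sum>k<m. csc (y + real k * pi / real m) ^ 2) = real m ^ 2 * csc (real m * y) ^ 2"
  using sum_shifts_derivative[OF has_real_derivative_cot cot_sum_shifts assms]
  by (simp add: sum_negf power2_eq_square)

lemma csc_squared_cot_sum_shifts:
  assumes "sin (real m * y) \<noteq> 0"
  shows "(\<Sum>k<m. csc (y + real k * pi / real m) ^ 2 * cot (y + real k * pi / real m))
    = real m ^ 3 * (csc (real m * y) ^ 2 * cot (real m * y))"
  using sum_shifts_derivative[OF has_real_derivative_csc_squared csc_squared_sum_shifts assms]
  by (simp add: sum_negf sum_distrib_left[symmetric] power2_eq_square power3_eq_cube)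

lemma csc_fourth_sum_shifts:
  assumes "sin (real m * y) \<noteq> 0"
  shows "(\<Sum>k<m. csc (y + real k * pi / real m) ^ 4)
    = real m ^ 4 * csc (real m * y) ^ 4 - 2 / 3 * real m ^ 2 * (real m ^ 2 - 1) * csc (real m * y) ^ 2"
proof -
  have "(\<Sum>k<m. 2 * csc (y + real k * pi / real m) ^ 2 - 3 * csc (y + real k * pi / real m) ^ 4)
      = real m ^ 4 * (2 * csc (real m * y) ^ 2 - 3 * csc (real m * y) ^ 4)"
    using sum_shifts_derivative[OF has_real_derivative_csc_squared_cot csc_squared_cot_sum_shifts assms]
    by (simp add: power3_eq_cube power4_eq_xxxx)
  then show ?thesis
    using csc_squared_sum_shifts[OF assms]
    by (simp add: sum_subtractf sum_distrib_left[symmetric] field_simps)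
qed

lemma sum_lessThan_double_symmetric:
  fixes f :: "nat \<Rightarrow> 'a::comm_semiring_1"
  assumes "\<And>k. k < n \<Longrightarrow> f (2 * n - 1 - k) = f k"
  shows "(\<Sum>k<2 * n. f k) = 2 * (\<Sum>k<n. f k)"
proof -
  have "(\<Sum>k<2 * n. f k) = (\<Sum>k<n. f k) + (\<Sum>k\<in>{n..<n + n}. f k)"
    by (simp add: mult_2 lessThan_atLeast0 sum.atLeastLessThan_concat)
  also have "(\<Sum>k\<in>{n..<n + n}. f k) = (\<Sum>k<n. f (k + n))"
    using sum.shift_bounds_nat_ivl[of f 0 n n] by (simp add: lessThan_atLeast0 comp_def)
  also have "\<dots> = (\<Sum>k<n. f (n - Suc k + n))"
    by (rule sum.nat_diff_reindex[symmetric])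
  also have "\<dots> = (\<Sum>k<n. f k)"
  proof (rule sum.cong)
    fix k assume "k \<in> {..<n}"
    then have "n - Suc k + n = 2 * n - 1 - k" and "k < n"
      by auto
    with assms show "f (n - Suc k + n) = f k"
      by simp
  qed simp
  finally show ?thesis
    by (simp add: mult_2)
qed

theorem mainTheorem15:
  fixes n :: nat
  assumes "n \<ge> 1"
  shows "(\<Sum>j=1..n. (csc (pi * (2 * real j - 1) / (4 * real n))) ^ 4)
           = 4 * (real n)^2 * (2 * (real n)^2 + 1) / 3"
proof -
  define T where "T k = csc (pi * (2 * real k + 1) / (4 * real n)) ^ 4" for k
  have centre: "real (2 * n) * (pi / (4 * real n)) = pi / 2"
    using assms by simp
  have shift: "pi / (4 * real n) + real k * pi / real (2 * n) = pi * (2 * real k + 1) / (4 * real n)"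
    for k
    using assms by (simp add: field_simps)
  have "(\<Sum>k<2 * n. T k) = real (2 * n) ^ 4 - 2 / 3 * real (2 * n) ^ 2 * (real (2 * n) ^ 2 - 1)"
    using csc_fourth_sum_shifts[of "2 * n" "pi / (4 * real n)"]
    unfolding centre shift by (simp add: T_def csc_def)
  moreover have "(\<Sum>k<2 * n. T k) = 2 * (\<Sum>k<n. T k)"
  proof (rule sum_lessThan_double_symmetric)
    fix k assume "k < n"
    then have "pi * (2 * real (2 * n - 1 - k) + 1) / (4 * real n)
        = pi - pi * (2 * real k + 1) / (4 * real n)"
      by (simp add: of_nat_diff field_simps)
    then show "T (2 * n - 1 - k) = T k"
      by (simp add: T_def csc_def)
  qed
  moreover have "(\<Sum>j=1..n. csc (pi * (2 * real j - 1) / (4 * real n)) ^ 4) = (\<Sum>k<n. T k)"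
    by (simp add: sum.atLeast1_atMost_eq T_def algebra_simps)
  ultimately show ?thesis
    by (simp add: field_simps power2_eq_square power4_eq_xxxx)
qed

end
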